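(* Let $F=\{f_i\}_{i=1}^N$ be a tight frame for an $n$-dimensional Hilbert space $\mathcal{H}_n$ and let $p>1$. If $S_F^{-1}F\in\zeta_{\mathfrak{R}}^{(1),p}(F)$, then $S_F^{-1}F\in\zeta_{\mathfrak{F}}^{(1),p}(F)$.
   Context: $F$ is tight if $\sum_i|\langle f,f_i\rangle|^2=A\|f\|^2$ for all $f$ and some $A>0$; $S_F$ is the frame operator and $S_F^{-1}F=\{S_F^{-1}f_i\}$ the canonical dual. $G=\{g_i\}$ is a dual of $F$ if $f=\sum_i\langle f,f_i\rangle g_i$ for all $f$. For a dual $G$ define $\mathrm{AE}_{\mathfrak{R}}^{(1),p}(F,G)=\{\frac1N\sum_i|\langle f_i,g_i\rangle|^p\}^{1/p}$ (average of spectral radii of the one-erasure error operators $f\mapsto\langle f,f_i\rangle g_i$) and $\mathrm{AE}_{\mathfrak{F}}^{(1),p}(F,G)=\{\frac1N\sum_i(\|f_i\|\|g_i\|)^p\}^{1/p}$ (average of their Frobenius norms). $\zeta_{\mathfrak{R}}^{(1),p}(F)$ (resp. $\zeta_{\mathfrak{F}}^{(1),p}(F)$) is the set of duals minimizing $\mathrm{AE}_{\mathfrak{R}}^{(1),p}(F,\cdot)$ (resp. $\mathrm{AE}_{\mathfrak{F}}^{(1),p}(F,\cdot)$) over all duals of $F$. *)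

theory Defs
  imports "HOL-Analysis.Analysis"
begin

text \<open>The n-dimensional (complex) Hilbert space H_n is modelled as complex ^ 'n,
  with the standard inner product (linear in the first argument) and its
  induced norm (the library norm on complex ^ 'n). A finite sequence
  F = {f_i}, i = 1..N, is a function nat => complex ^ 'n restricted to i < N.\<close>

definition cinner :: "complex ^ 'n \<Rightarrow> complex ^ 'n \<Rightarrow> complex" where
  "cinner x y = (\<Sum>k\<in>UNIV. x $ k * cnj (y $ k))"

definition is_tight_frame :: "(nat \<Rightarrow> complex ^ 'n) \<Rightarrow> nat \<Rightarrow> bool" where
  "is_tight_frame F N \<longleftrightarrow> (\<exists>A>0. \<forall>f. (\<Sum>i<N. (cmod (cinner f (F i)))\<^sup>2) = A * (norm f)\<^sup>2)"

definition frame_op :: "(nat \<Rightarrow> complex ^ 'n) \<Rightarrow> nat \<Rightarrow> complex ^ 'n \<Rightarrow> complex ^ 'n" where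
  "frame_op F N f = (\<Sum>i<N. cinner f (F i) *s F i)"

definition canonical_dual :: "(nat \<Rightarrow> complex ^ 'n) \<Rightarrow> nat \<Rightarrow> nat \<Rightarrow> complex ^ 'n" where
  "canonical_dual F N i = inv (frame_op F N) (F i)"

definition is_dual :: "(nat \<Rightarrow> complex ^ 'n) \<Rightarrow> nat \<Rightarrow> (nat \<Rightarrow> complex ^ 'n) \<Rightarrow> bool" where
  "is_dual F N G \<longleftrightarrow> (\<forall>f. f = (\<Sum>i<N. cinner f (F i) *s G i))"

definition AE_R :: "real \<Rightarrow> (nat \<Rightarrow> complex ^ 'n) \<Rightarrow> nat \<Rightarrow> (nat \<Rightarrow> complex ^ 'n) \<Rightarrow> real" where
  "AE_R p F N G = ((1 / real N) * (\<Sum>i<N. (cmod (cinner (F i) (G i))) powr p)) powr (1 / p)"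

definition AE_F :: "real \<Rightarrow> (nat \<Rightarrow> complex ^ 'n) \<Rightarrow> nat \<Rightarrow> (nat \<Rightarrow> complex ^ 'n) \<Rightarrow> real" where
  "AE_F p F N G = ((1 / real N) * (\<Sum>i<N. (norm (F i) * norm (G i)) powr p)) powr (1 / p)"

definition zeta_R :: "real \<Rightarrow> (nat \<Rightarrow> complex ^ 'n) \<Rightarrow> nat \<Rightarrow> (nat \<Rightarrow> complex ^ 'n) set" where
  "zeta_R p F N = {G. is_dual F N G \<and> (\<forall>H. is_dual F N H \<longrightarrow> AE_R p F N G \<le> AE_R p F N H)}"

definition zeta_F :: "real \<Rightarrow> (nat \<Rightarrow> complex ^ 'n) \<Rightarrow> nat \<Rightarrow> (nat \<Rightarrow> complex ^ 'n) set" where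
  "zeta_F p F N = {G. is_dual F N G \<and> (\<forall>H. is_dual F N H \<longrightarrow> AE_F p F N G \<le> AE_F p F N H)}"

end

theory Submission
  imports Defs
begin

text \<open>For a tight frame with bound \<open>A\<close> the frame operator is \<open>A\<close> times the identity, so the
  canonical dual is \<open>f\<^sub>i / A\<close>. Each pair \<open>f\<^sub>i, f\<^sub>i / A\<close> attains equality in the Cauchy--Schwarz
  inequality, hence the two error measures coincide at the canonical dual, while for every
  other dual the spectral-radius measure is bounded by the Frobenius one. Minimality for the
  former therefore transfers to the latter.\<close>

lemma cinner_add_left: "cinner (x + y) z = cinner x z + cinner y z"
  by (simp add: cinner_def distrib_right sum.distrib)

lemma cinner_add_right: "cinner z (x + y) = cinner z x + cinner z y"
  by (simp add: cinner_def distrib_left sum.distrib)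

lemma cinner_diff_left: "cinner (x - y) z = cinner x z - cinner y z"
  by (simp add: cinner_def left_diff_distrib sum_subtractf)

lemma cinner_scale_left: "cinner (c *s x) z = c * cinner x z"
  by (simp add: cinner_def sum_distrib_left mult.assoc)

lemma cinner_scale_right: "cinner z (c *s x) = cnj c * cinner z x"
  by (simp add: cinner_def sum_distrib_left mult.assoc mult.left_commute)

lemma cinner_scaleR_right: "cinner z (c *\<^sub>R x) = complex_of_real c * cinner z x"
  unfolding cinner_def vector_scaleR_component
  by (simp add: scaleR_conv_of_real sum_distrib_left mult.left_commute)

lemma cinner_sum_left: "cinner (\<Sum>i\<in>I. v i) z = (\<Sum>i\<in>I. cinner (v i) z)"
  unfolding cinner_def by (simp add: sum_component sum_distrib_right) (rule sum.swap)

lemma cinner_commute_cnj: "cinner x y = cnj (cinner y x)"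
  by (simp add: cinner_def mult.commute)

lemma cinner_self: "cinner x x = complex_of_real ((norm x)\<^sup>2)"
proof -
  have "(norm x)\<^sup>2 = (\<Sum>k\<in>UNIV. (cmod (x $ k))\<^sup>2)"
    unfolding norm_vec_def L2_set_def by (simp add: sum_nonneg)
  then show ?thesis
    unfolding cinner_def by (simp add: complex_norm_square of_real_sum del: of_real_power)
qed

lemma cinner_self_eq_0_iff [simp]: "cinner x x = 0 \<longleftrightarrow> x = 0"
  by (simp add: cinner_self)

lemma norm_cinner_le:
  fixes x y :: "complex ^ 'n"
  shows "cmod (cinner x y) \<le> norm x * norm y"
proof -
  define ax :: "real ^ 'n" where "ax = (\<chi> k. cmod (x $ k))"
  define ay :: "real ^ 'n" where "ay = (\<chi> k. cmod (y $ k))"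
  have "cmod (cinner x y) \<le> (\<Sum>k\<in>UNIV. cmod (x $ k * cnj (y $ k)))"
    unfolding cinner_def by (rule norm_sum)
  also have "\<dots> = inner ax ay"
    unfolding ax_def ay_def inner_vec_def by (simp add: norm_mult)
  also have "\<dots> \<le> norm ax * norm ay"
    by (rule norm_cauchy_schwarz)
  also have "\<dots> = norm x * norm y"
    unfolding ax_def ay_def norm_vec_def by simp
  finally show ?thesis .
qed

lemma norm_cinner_scaleR_self:
  assumes "c \<ge> 0"
  shows "cmod (cinner x (c *\<^sub>R x)) = norm x * norm (c *\<^sub>R x)"
  using assms by (simp add: cinner_scaleR_right cinner_self norm_mult power2_eq_square)

text \<open>Polarization: over the complex field a sesquilinear form is determined by its
  diagonal; the test vectors \<open>f + g\<close> and \<open>f + \<i> g\<close> separate \<open>\<langle>T f, g\<rangle>\<close> from \<open>\<langle>T g, f\<rangle>\<close>.\<close>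

lemma linear_eq_0_if_cinner_self_eq_0:
  assumes add: "\<And>f g. T (f + g) = T f + T g"
    and scale: "\<And>c f. T (c *s f) = c *s T f"
    and diag: "\<And>f. cinner (T f) f = 0"
  shows "T f = 0"
proof -
  have "cinner (T f) g = 0" for g
  proof -
    have sum: "cinner (T f) g + cinner (T g) f = 0"
      using diag[of "f + g"] diag[of f] diag[of g]
      by (simp add: add cinner_add_left cinner_add_right add.commute)
    have rot: "- \<i> * cinner (T f) g + \<i> * cinner (T g) f = 0"
      using diag[of "f + \<i> *s g"] diag[of f] diag[of g]
      by (simp add: add scale cinner_add_left cinner_add_right cinner_scale_left
          cinner_scale_right algebra_simps)
    from sum have "cinner (T g) f = - cinner (T f) g"
      by (simp add: eq_neg_iff_add_eq_0 add.commute)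
    with rot have "(2 * \<i>) * cinner (T f) g = 0"
      by (simp add: algebra_simps)
    then show ?thesis by simp
  qed
  from this[of "T f"] show ?thesis by simp
qed

lemma frame_op_add: "frame_op F N (f + g) = frame_op F N f + frame_op F N g"
  unfolding frame_op_def by (simp add: cinner_add_left sum.distrib)

lemma frame_op_scale: "frame_op F N (c *s f) = c *s frame_op F N f"
  unfolding frame_op_def
  by (simp add: vec_eq_iff sum_component cinner_scale_left sum_distrib_left mult.assoc)

lemma cinner_frame_op_self:
  "cinner (frame_op F N f) f = complex_of_real (\<Sum>i<N. (cmod (cinner f (F i)))\<^sup>2)"
  unfolding frame_op_def cinner_sum_left cinner_scale_left of_real_sum
  by (rule sum.cong)
    (auto simp: cinner_commute_cnj[of "F _" f] complex_norm_square simp del: of_real_power)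

lemma frame_op_tight:
  assumes bound: "\<And>f. (\<Sum>i<N. (cmod (cinner f (F i)))\<^sup>2) = A * (norm f)\<^sup>2"
  shows "frame_op F N f = complex_of_real A *s f"
proof -
  let ?T = "\<lambda>f. frame_op F N f - complex_of_real A *s f"
  have "?T f = 0"
  proof (rule linear_eq_0_if_cinner_self_eq_0[where T = ?T])
    show "?T (f + g) = ?T f + ?T g" for f g
      by (simp add: frame_op_add vector_add_ldistrib)
    show "?T (c *s f) = c *s ?T f" for c f
      by (simp add: frame_op_scale vec_eq_iff algebra_simps)
    show "cinner (?T f) f = 0" for f
      by (simp add: cinner_diff_left cinner_scale_left cinner_frame_op_self bound cinner_self)
  qed
  then show ?thesis by simp
qed

lemma canonical_dual_tight:
  assumes "A > 0"
    and bound: "\<And>f. (\<Sum>i<N. (cmod (cinner f (F i)))\<^sup>2) = A * (norm f)\<^sup>2"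
  shows "canonical_dual F N i = (1 / A) *\<^sub>R F i"
proof -
  have S: "frame_op F N f = complex_of_real A *s f" for f
    using bound by (rule frame_op_tight)
  have "frame_op F N ((1 / A) *\<^sub>R f) = f" for f
    using \<open>A > 0\<close> by (simp add: S vec_eq_iff vector_scaleR_component) (simp add: scaleR_conv_of_real)
  moreover have "inj (frame_op F N)"
    using \<open>A > 0\<close> by (intro injI) (simp add: S vec_eq_iff)
  ultimately show ?thesis
    unfolding canonical_dual_def by (metis inv_f_f)
qed

lemma AE_R_le_AE_F:
  assumes "p > 0"
  shows "AE_R p F N G \<le> AE_F p F N G"
proof -
  have "(\<Sum>i<N. (cmod (cinner (F i) (G i))) powr p) \<le> (\<Sum>i<N. (norm (F i) * norm (G i)) powr p)"
    using assms by (intro sum_mono powr_mono2) (auto simp: norm_cinner_le)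
  then show ?thesis
    unfolding AE_R_def AE_F_def using assms
    by (intro powr_mono2 mult_left_mono) (auto intro!: sum_nonneg divide_nonneg_nonneg)
qed

lemma AE_F_eq_AE_R:
  assumes "\<And>i. cmod (cinner (F i) (G i)) = norm (F i) * norm (G i)"
  shows "AE_F p F N G = AE_R p F N G"
  unfolding AE_R_def AE_F_def assms ..

lemma zeta_R_imp_zeta_F:
  assumes "p > 0"
    and "G \<in> zeta_R p F N"
    and "AE_F p F N G = AE_R p F N G"
  shows "G \<in> zeta_F p F N"
  unfolding zeta_F_def
proof (intro CollectI conjI allI impI)
  show "is_dual F N G"
    using assms(2) by (simp add: zeta_R_def)
  fix H
  assume "is_dual F N H"
  then have "AE_R p F N G \<le> AE_R p F N H"
    using assms(2) by (simp add: zeta_R_def)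
  also have "\<dots> \<le> AE_F p F N H"
    using \<open>p > 0\<close> by (rule AE_R_le_AE_F)
  finally show "AE_F p F N G \<le> AE_F p F N H"
    using assms(3) by simp
qed

theorem corollary5p7:
  fixes F :: "nat \<Rightarrow> complex ^ 'n" and N :: nat and p :: real
  assumes "is_tight_frame F N"
    and "p > 1"
    and "canonical_dual F N \<in> zeta_R p F N"
  shows "canonical_dual F N \<in> zeta_F p F N"
proof -
  obtain A where "A > 0"
    and bound: "\<And>f. (\<Sum>i<N. (cmod (cinner f (F i)))\<^sup>2) = A * (norm f)\<^sup>2"
    using assms(1) unfolding is_tight_frame_def by blast
  then have dual: "canonical_dual F N i = (1 / A) *\<^sub>R F i" for i
    by (rule canonical_dual_tight)
  have "AE_F p F N (canonical_dual F N) = AE_R p F N (canonical_dual F N)"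
    using \<open>A > 0\<close> unfolding dual by (intro AE_F_eq_AE_R norm_cinner_scaleR_self) simp
  with assms(2,3) show ?thesis
    by (intro zeta_R_imp_zeta_F) auto
qed

end
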